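(* For any $a,b>0$, \[ a\sharp b+\gamma(a,b)\,L(a,b)\le a\nabla b,\qquad\text{where}\qquad \gamma(a,b):=\frac{\ln^{2}(b/a)}{2\left(\ln^{2}(b/a)+4\right)}\ \ (\ge 0). \]
   Context: $a\sharp b=\sqrt{ab}$, $a\nabla b=\frac{a+b}{2}$, and $L(a,b)=\frac{b-a}{\ln b-\ln a}$ for $a\ne b$ is the logarithmic mean, with the usual convention $L(a,a)=a$. *)

theory Defs
  imports Complex_Main
begin

definition geom_mean :: "real \<Rightarrow> real \<Rightarrow> real" where
  "geom_mean a b = sqrt (a * b)"

definition arith_mean :: "real \<Rightarrow> real \<Rightarrow> real" where
  "arith_mean a b = (a + b) / 2"

definition log_mean :: "real \<Rightarrow> real \<Rightarrow> real" where
  "log_mean a b = (if a = b then a else (b - a) / (ln b - ln a))"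

definition gamma_coef :: "real \<Rightarrow> real \<Rightarrow> real" where
  "gamma_coef a b = (ln (b / a))\<^sup>2 / (2 * ((ln (b / a))\<^sup>2 + 4))"

end

theory Submission
  imports Defs
begin

text \<open>Every pair \<open>a, b > 0\<close> can be written as \<open>a = c e\<^sup>-\<^sup>t\<close>, \<open>b = c e\<^sup>t\<close> with
  \<open>c = a \<sharp> b\<close> and \<open>t = ln (b/a) / 2\<close>. Then \<open>a \<nabla> b = c cosh t\<close>, \<open>t L(a,b) = c sinh t\<close> and
  \<open>\<gamma>(a,b) = t\<^sup>2 / (2 (1 + t\<^sup>2))\<close>, so the inequality becomes the one-variable estimate
  \<open>t sinh t \<le> 2 (1 + t\<^sup>2) (cosh t - 1)\<close>. Both sides are even in \<open>t\<close>, and for \<open>t \<ge> 0\<close>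
  the difference is nondecreasing because \<open>sinh t \<ge> t\<close>.\<close>

lemma sinh_real_ge_self:
  fixes t :: real
  assumes "t \<ge> 0"
  shows "t \<le> sinh t"
  using real_le_x_sinh[OF assms] by (simp add: sinh_field_def exp_minus)

lemma x_sinh_le_cosh_minus_one:
  fixes t :: real
  shows "t * sinh t \<le> 2 * (1 + t\<^sup>2) * (cosh t - 1)"
proof -
  have nonneg_case: "s * sinh s \<le> 2 * (1 + s\<^sup>2) * (cosh s - 1)" if "s \<ge> 0" for s :: real
  proof -
    let ?f = "\<lambda>x::real. 2 * (1 + x\<^sup>2) * (cosh x - 1) - x * sinh x"
    have "?f 0 \<le> ?f s"
    proof (rule DERIV_nonneg_imp_nondecreasing[OF that])
      fix x :: real
      assume "0 \<le> x"
      have "DERIV ?f x :> 3 * x * (cosh x - 1) + (sinh x - x) + 2 * x\<^sup>2 * sinh x"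
        by (auto intro!: derivative_eq_intros simp: algebra_simps power2_eq_square)
      moreover have "3 * x * (cosh x - 1) + (sinh x - x) + 2 * x\<^sup>2 * sinh x \<ge> 0"
        using \<open>0 \<le> x\<close> sinh_real_ge_self[OF \<open>0 \<le> x\<close>] cosh_real_ge_1[of x] by simp
      ultimately show "\<exists>y. DERIV ?f x :> y \<and> y \<ge> 0" by blast
    qed
    then show ?thesis by simp
  qed
  show ?thesis
  proof (cases "t \<ge> 0")
    case True
    then show ?thesis by (rule nonneg_case)
  next
    case False
    then show ?thesis using nonneg_case[of "- t"] by simp
  qed
qed

lemma pos_pair_exp_param:
  fixes a b :: real
  assumes "a > 0" and "b > 0"
  obtains c t where "c > 0" and "a = c * exp (- t)" and "b = c * exp t"
proof
  have e: "exp (ln (b / a) / 2) = sqrt (b / a)"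
    using assms by (simp add: powr_half_sqrt[symmetric] powr_def)
  show "sqrt (a * b) > 0"
    using assms by simp
  show "a = sqrt (a * b) * exp (- (ln (b / a) / 2))"
    using assms by (simp add: exp_minus e real_sqrt_divide real_sqrt_mult field_simps)
  show "b = sqrt (a * b) * exp (ln (b / a) / 2)"
    using assms by (simp add: e real_sqrt_divide real_sqrt_mult field_simps)
qed

lemma geom_mean_exp_param:
  assumes "c > 0"
  shows "geom_mean (c * exp (- t)) (c * exp t) = c"
  using assms by (simp add: geom_mean_def exp_minus field_simps)

lemma arith_mean_exp_param: "arith_mean (c * exp (- t)) (c * exp t) = c * cosh t"
  by (simp add: arith_mean_def cosh_field_def field_simps)

lemma log_mean_exp_param:
  assumes "c > 0"
  shows "t * log_mean (c * exp (- t)) (c * exp t) = c * sinh t"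
proof (cases "t = 0")
  case False
  then have "exp (- t) \<noteq> exp t" by simp
  moreover have "ln (c * exp t) - ln (c * exp (- t)) = 2 * t"
    using assms by (simp add: ln_mult)
  ultimately show ?thesis
    using False by (simp add: log_mean_def sinh_field_def field_simps)
qed (simp add: log_mean_def)

lemma gamma_coef_exp_param:
  assumes "c > 0"
  shows "gamma_coef (c * exp (- t)) (c * exp t) = t\<^sup>2 / (2 * (1 + t\<^sup>2))"
proof -
  have "ln (c * exp t / (c * exp (- t))) = 2 * t"
    using assms by (simp flip: exp_diff)
  moreover have "1 + t\<^sup>2 \<noteq> 0"
    by (metis add_pos_nonneg zero_less_one zero_le_power2 less_irrefl)
  ultimately show ?thesis
    by (simp add: gamma_coef_def power_mult_distrib field_simps)
qed

theorem corollary2p5: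
  fixes a b :: real
  assumes "a > 0" and "b > 0"
  shows "geom_mean a b + gamma_coef a b * log_mean a b \<le> arith_mean a b"
proof -
  obtain c t where "c > 0" and a: "a = c * exp (- t)" and b: "b = c * exp t"
    using pos_pair_exp_param[OF assms] .
  have "gamma_coef a b * log_mean a b = t / (2 * (1 + t\<^sup>2)) * (t * log_mean a b)"
    unfolding a b gamma_coef_exp_param[OF \<open>c > 0\<close>] by (simp add: power2_eq_square)
  also have "\<dots> = c * (t * sinh t / (2 * (1 + t\<^sup>2)))"
    unfolding a b log_mean_exp_param[OF \<open>c > 0\<close>] by simp
  also have "\<dots> \<le> c * (cosh t - 1)"
    using \<open>c > 0\<close> x_sinh_le_cosh_minus_one[of t]
    by (intro mult_left_mono) (simp_all add: divide_le_eq add_pos_nonneg mult.commute)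
  also have "\<dots> = arith_mean a b - geom_mean a b"
    unfolding a b arith_mean_exp_param geom_mean_exp_param[OF \<open>c > 0\<close>] by (simp add: algebra_simps)
  finally show ?thesis by simp
qed

end
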